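(* Let $n\ge1$ and $\alpha,\beta,u,v\in V_n$. If the Wang tile $(\alpha,\beta,u,v)$ (right $\alpha$, top $\beta$, left $u$, bottom $v$) belongs to $\mathcal T'_n$, then there exists a unique valid rectangular pattern with tiles in $\mathcal T'_n$ whose right, top, left and bottom labels are respectively $\tau_n(\alpha)$, $\tau_n(\beta)$, $\tau_n(u)$ and $\tau_n(v)$.
   Context: Write $\bar m=m+1$. $V_n=\{(v_0,v_1,v_2)\in\mathbb{Z}^3: 0\le v_0\le v_1\le 1,\ v_1\le v_2\le n+1\}$, elements written as words $v_0v_1v_2$. A Wang tile is $t=(a,b,c,d)$ with $\mathrm{RIGHT}(t)=a$, $\mathrm{TOP}(t)=b$, $\mathrm{LEFT}(t)=c$, $\mathrm{BOTTOM}(t)=d$; $\hat t=(b,a,d,c)$, $\hat S=\{\hat t:t\in S\}$. Define (as (right, top, left, bottom)): $W_n=\{(11(i+1),11(j+1),11i,11j):1\le i,j\le n\}$; $B'_n=\{(00(i+1),111,00i,11n):0\le i\le n\}$; $G_n=\{(01(i+1),111,00i,11(n+1)):0\le i\le n\}$; $Y_n=\{(01(i+1),112,01i,11(n+1)):1\le i\le n\}$; $A_n=\{(00(i+1),112,01i,11n):1\le i\le n\}$; $J'_n=\{((0,k,l),(0,r,s),(0,s,r+n),(0,l,k+n)):(k,l),(r,s)\in\{(0,0),(0,1),(1,1)\}\}$. $\mathcal T'_n=W_n\cup B'_n\cup G_n\cup Y_n\cup A_n\cup\hat B'_n\cup\hat G_n\cup\hat Y_n\cup\hat A_n\cup J'_n$.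 A rectangular pattern is valid if adjacent tiles agree on common edges; its bottom (top) labels are those of its bottom (top) row read left to right, its left (right) labels those of its left (right) column read bottom to top. $\tau_n:V_n\to V_n^*$ is $\tau_n(xyz)=(0,x-y+1,n)\cdot(11n)^{z-x-1}\cdot(11\bar n)^{n+1-z}$ if $x\ne z$, and $\tau_n(xyz)=(0,x-y+1,n+1)\cdot(11\bar n)^{n-z}$ if $x=z$. *)

theory Defs
  imports Main
begin

text \<open>Labels are integer triples v0 v1 v2 (the word v0v1v2).
  A Wang tile is (right, top, left, bottom).\<close>

type_synonym label = "int \<times> int \<times> int"
type_synonym tile = "label \<times> label \<times> label \<times> label"

definition V :: "nat \<Rightarrow> label set" where
  "V n = {(v0, v1, v2). 0 \<le> v0 \<and> v0 \<le> v1 \<and> v1 \<le> 1 \<and> v1 \<le> v2 \<and> v2 \<le> int n + 1}"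

fun RIGHT :: "tile \<Rightarrow> label" where "RIGHT (a, b, c, d) = a"
fun TOP :: "tile \<Rightarrow> label" where "TOP (a, b, c, d) = b"
fun LEFT :: "tile \<Rightarrow> label" where "LEFT (a, b, c, d) = c"
fun BOTTOM :: "tile \<Rightarrow> label" where "BOTTOM (a, b, c, d) = d"

fun hat :: "tile \<Rightarrow> tile" where "hat (a, b, c, d) = (b, a, d, c)"

definition W :: "nat \<Rightarrow> tile set" where
  "W n = {((1,1,i+1), (1,1,j+1), (1,1,i), (1,1,j)) | i j. 1 \<le> i \<and> i \<le> int n \<and> 1 \<le> j \<and> j \<le> int n}"

definition B' :: "nat \<Rightarrow> tile set" where
  "B' n = {((0,0,i+1), (1,1,1), (0,0,i), (1,1,int n)) | i. 0 \<le> i \<and> i \<le> int n}"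

definition G :: "nat \<Rightarrow> tile set" where
  "G n = {((0,1,i+1), (1,1,1), (0,0,i), (1,1,int n + 1)) | i. 0 \<le> i \<and> i \<le> int n}"

definition Y :: "nat \<Rightarrow> tile set" where
  "Y n = {((0,1,i+1), (1,1,2), (0,1,i), (1,1,int n + 1)) | i. 1 \<le> i \<and> i \<le> int n}"

definition A :: "nat \<Rightarrow> tile set" where
  "A n = {((0,0,i+1), (1,1,2), (0,1,i), (1,1,int n)) | i. 1 \<le> i \<and> i \<le> int n}"

definition J' :: "nat \<Rightarrow> tile set" where
  "J' n = {((0,k,l), (0,r,s), (0,s,r + int n), (0,l,k + int n)) | k l r s.
            (k, l) \<in> {(0,0),(0,1),(1,1)} \<and> (r, s) \<in> {(0,0),(0,1),(1,1)}}"

definition T' :: "nat \<Rightarrow> tile set" where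
  "T' n = W n \<union> B' n \<union> G n \<union> Y n \<union> A n
          \<union> hat ` B' n \<union> hat ` G n \<union> hat ` Y n \<union> hat ` A n \<union> J' n"

fun tau :: "nat \<Rightarrow> label \<Rightarrow> label list" where
  "tau n (x, y, z) =
     (if x \<noteq> z then
        (0, x - y + 1, int n) # replicate (nat (z - x - 1)) (1, 1, int n)
          @ replicate (nat (int n + 1 - z)) (1, 1, int n + 1)
      else (0, x - y + 1, int n + 1) # replicate (nat (int n - z)) (1, 1, int n + 1))"

text \<open>A rectangular pattern is a list of rows, listed from bottom to top;
  each row is a list of tiles listed from left to right.\<close>
definition valid_pattern :: "tile set \<Rightarrow> tile list list \<Rightarrow> bool" where
  "valid_pattern S P \<longleftrightarrow>
     P \<noteq> [] \<and> hd P \<noteq> [] \<and> (\<forall>row \<in> set P. length row = length (hd P)) \<and>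
     (\<forall>row \<in> set P. set row \<subseteq> S) \<and>
     (\<forall>i < length P. \<forall>j. j + 1 < length (hd P) \<longrightarrow> RIGHT (P ! i ! j) = LEFT (P ! i ! (j + 1))) \<and>
     (\<forall>i. i + 1 < length P \<longrightarrow> (\<forall>j < length (hd P). TOP (P ! i ! j) = BOTTOM (P ! (i + 1) ! j)))"

definition bottom_labels :: "tile list list \<Rightarrow> label list" where
  "bottom_labels P = map BOTTOM (hd P)"
definition top_labels :: "tile list list \<Rightarrow> label list" where
  "top_labels P = map TOP (last P)"
definition left_labels :: "tile list list \<Rightarrow> label list" where
  "left_labels P = map (\<lambda>row. LEFT (hd row)) P"
definition right_labels :: "tile list list \<Rightarrow> label list" where
  "right_labels P = map (\<lambda>row. RIGHT (last row)) P"

end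

theory Submission
  imports Defs
begin

text \<open>A tile of T'_n is determined by its left and bottom labels, so a valid pattern is
  determined by its left and bottom boundary words; this gives uniqueness. For existence the
  pattern is written down explicitly: for left label (a, y, c) and bottom label (b, y', d) it is
  an (n + 1 - a) by (n + 1 - b) rectangle with a J'_n tile in the corner, tiles of
  B'_n, G_n, Y_n along the bottom row, their mirror images under hat along the left column,
  and W_n tiles inside. Its right and top boundary words are then compared with tau_n of the
  right and top labels, one tile family at a time.\<close>

lemma length_tau:
  assumes "n \<ge> 1" "(x, y, z) \<in> V n"
  shows "length (tau n (x, y, z)) = nat (int n + 1 - x)"
  using assms unfolding V_def by auto

lemma nth_tau:
  assumes "n \<ge> 1" "(x, y, z) \<in> V n" "i < nat (int n + 1 - x)"
  shows "tau n (x, y, z) ! i =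
    (if i = 0 then (0, x - y + 1, int n + of_bool (z \<le> x))
     else (1, 1, int n + of_bool (z \<le> x + int i)))"
proof (cases i)
  case 0
  with assms show ?thesis unfolding V_def by auto
next
  case (Suc k)
  with assms show ?thesis unfolding V_def by (auto simp: nth_append)
qed

lemma tau_not_Nil: "tau n x \<noteq> []"
  by (cases x) simp

lemma valid_pattern_length_row:
  "valid_pattern S P \<Longrightarrow> i < length P \<Longrightarrow> length (P ! i) = length (hd P)"
  unfolding valid_pattern_def using nth_mem by blast

lemma valid_pattern_nth_mem:
  assumes "valid_pattern S P" "i < length P" "j < length (hd P)"
  shows "P ! i ! j \<in> S"
proof -
  have "set (P ! i) \<subseteq> S" using assms(1,2) unfolding valid_pattern_def using nth_mem by blast
  moreover have "j < length (P ! i)"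
    using valid_pattern_length_row[OF assms(1,2)] assms(3) by simp
  ultimately show ?thesis by (meson nth_mem subsetD)
qed

lemma valid_pattern_LEFT:
  assumes P: "valid_pattern S P" and "i < length P" "j < length (hd P)"
  shows "LEFT (P ! i ! j) = (if j = 0 then left_labels P ! i else RIGHT (P ! i ! (j - 1)))"
proof (cases j)
  case 0
  have "P ! i \<noteq> []"
    using valid_pattern_length_row[OF P \<open>i < length P\<close>] \<open>j < length (hd P)\<close> by auto
  with 0 \<open>i < length P\<close> show ?thesis by (simp add: left_labels_def hd_conv_nth)
next
  case (Suc k)
  have "k + 1 < length (hd P)" using Suc assms(3) by simp
  then have "RIGHT (P ! i ! k) = LEFT (P ! i ! (k + 1))"
    using P assms(2) unfolding valid_pattern_def by blast
  with Suc show ?thesis by simp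
qed

lemma valid_pattern_BOTTOM:
  assumes P: "valid_pattern S P" and "i < length P" "j < length (hd P)"
  shows "BOTTOM (P ! i ! j) = (if i = 0 then bottom_labels P ! j else TOP (P ! (i - 1) ! j))"
proof (cases i)
  case 0
  have "P \<noteq> []" using P unfolding valid_pattern_def by blast
  with 0 \<open>j < length (hd P)\<close> show ?thesis by (simp add: bottom_labels_def hd_conv_nth)
next
  case (Suc k)
  have "k + 1 < length P" using Suc assms(2) by simp
  then have "TOP (P ! k ! j) = BOTTOM (P ! (k + 1) ! j)"
    using P assms(3) unfolding valid_pattern_def by blast
  with Suc show ?thesis by simp
qed

lemma valid_pattern_unique:
  assumes inj: "inj_on (\<lambda>t. (LEFT t, BOTTOM t)) S"
    and P: "valid_pattern S P" and Q: "valid_pattern S Q"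
    and left: "left_labels P = left_labels Q" and bottom: "bottom_labels P = bottom_labels Q"
  shows "P = Q"
proof -
  have height: "length Q = length P"
    using left unfolding left_labels_def by (metis length_map)
  have width: "length (hd Q) = length (hd P)"
    using bottom unfolding bottom_labels_def by (metis length_map)
  have tiles: "P ! i ! j = Q ! i ! j" if "i < length P" "j < length (hd P)" for i j
    using that
  proof (induction "i + j" arbitrary: i j rule: less_induct)
    case less
    have "LEFT (P ! i ! j) = LEFT (Q ! i ! j)"
    proof (cases j)
      case (Suc k)
      then have "P ! i ! k = Q ! i ! k" using less by simp
      then show ?thesis
        using valid_pattern_LEFT[OF P less.prems] valid_pattern_LEFT[OF Q]
          less.prems height width Suc
        by simp
    qed (use valid_pattern_LEFT[OF P less.prems] valid_pattern_LEFT[OF Q]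
           less.prems height width left in simp)
    moreover have "BOTTOM (P ! i ! j) = BOTTOM (Q ! i ! j)"
    proof (cases i)
      case (Suc k)
      then have "P ! k ! j = Q ! k ! j" using less by simp
      then show ?thesis
        using valid_pattern_BOTTOM[OF P less.prems] valid_pattern_BOTTOM[OF Q]
          less.prems height width Suc
        by simp
    qed (use valid_pattern_BOTTOM[OF P less.prems] valid_pattern_BOTTOM[OF Q]
           less.prems height width bottom in simp)
    ultimately show ?case
      using inj_onD[OF inj] valid_pattern_nth_mem[OF P less.prems]
        valid_pattern_nth_mem[OF Q] less.prems height width
      by simp
  qed
  show ?thesis
  proof (rule nth_equalityI)
    fix i assume i: "i < length P"
    show "P ! i = Q ! i"
      using tiles i height width valid_pattern_length_row[OF P i] valid_pattern_length_row[OF Q]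
      by (simp add: nth_equalityI)
  qed (simp add: height)
qed

fun complete_tile :: "nat \<Rightarrow> label \<Rightarrow> label \<Rightarrow> tile" where
  "complete_tile n (p, p', p'') (q, q', q'') =
    (if p = 1 \<and> q = 1 then ((1, 1, p'' + 1), (1, 1, q'' + 1), (p, p', p''), (q, q', q''))
     else if p = 0 \<and> q = 1 then
       ((0, of_bool (q'' = int n + 1), p'' + 1), (1, 1, p' + 1), (p, p', p''), (q, q', q''))
     else if p = 1 \<and> q = 0 then
       ((1, 1, q' + 1), (0, of_bool (p'' = int n + 1), q'' + 1), (p, p', p''), (q, q', q''))
     else ((0, q'' - int n, q'), (0, p'' - int n, p'), (p, p', p''), (q, q', q'')))"

lemma complete_tile_LEFT_BOTTOM:
  assumes "t \<in> T' n"
  shows "complete_tile n (LEFT t) (BOTTOM t) = t"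
  using assms unfolding T'_def W_def B'_def G_def Y_def A_def J'_def
  by (elim UnE imageE; auto)

lemma inj_on_LEFT_BOTTOM_T': "inj_on (\<lambda>t. (LEFT t, BOTTOM t)) (T' n)"
  by (rule inj_on_inverseI[where g = "\<lambda>(l, b). complete_tile n l b"])
    (simp add: complete_tile_LEFT_BOTTOM)

definition grid_pattern ::
    "nat \<Rightarrow> nat \<Rightarrow> (nat \<Rightarrow> nat \<Rightarrow> label) \<Rightarrow> (nat \<Rightarrow> nat \<Rightarrow> label) \<Rightarrow> tile list list" where
  "grid_pattern h w vert horiz =
     map (\<lambda>i. map (\<lambda>j. (vert i (Suc j), horiz (Suc i) j, vert i j, horiz i j)) [0..<w]) [0..<h]"

lemma valid_grid_pattern:
  assumes "0 < h" "0 < w"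
    and "\<And>i j. i < h \<Longrightarrow> j < w \<Longrightarrow> (vert i (Suc j), horiz (Suc i) j, vert i j, horiz i j) \<in> S"
  shows "valid_pattern S (grid_pattern h w vert horiz)"
proof -
  have "hd (grid_pattern h w vert horiz) =
      map (\<lambda>j. (vert 0 (Suc j), horiz 1 j, vert 0 j, horiz 0 j)) [0..<w]"
    using assms(1) by (simp add: grid_pattern_def hd_map)
  then show ?thesis
    using assms unfolding valid_pattern_def by (auto simp: grid_pattern_def)
qed

lemma grid_pattern_labels:
  assumes "0 < h" "0 < w"
  shows "right_labels (grid_pattern h w vert horiz) = map (\<lambda>i. vert i w) [0..<h]"
    and "top_labels (grid_pattern h w vert horiz) = map (horiz h) [0..<w]"
    and "left_labels (grid_pattern h w vert horiz) = map (\<lambda>i. vert i 0) [0..<h]"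
    and "bottom_labels (grid_pattern h w vert horiz) = map (horiz 0) [0..<w]"
  using assms
  by (simp_all add: grid_pattern_def right_labels_def top_labels_def left_labels_def
      bottom_labels_def last_map hd_map)

text \<open>The label of the vertical edge to the left of tile (i, j) in the pattern substituted
  for a tile with left label u and bottom label v. Transposing the pattern and applying hat to
  every tile swaps u and v, so the horizontal edge below tile (i, j) is labelled
  subst_edge n v u j i.\<close>

fun subst_edge :: "nat \<Rightarrow> label \<Rightarrow> label \<Rightarrow> nat \<Rightarrow> nat \<Rightarrow> label" where
  "subst_edge n (a, y, c) (b, y', d) i j =
     (if j = 0 then tau n (a, y, c) ! i
      else if i = 0 then (0, of_bool (d \<le> b + int j - 1), b - y' + int j)
      else (1, 1, of_bool (c \<le> a + int i - 1) + int j))"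

lemma subst_edge_left_boundary: "subst_edge n u v i 0 = tau n u ! i"
  by (cases u; cases v) simp

definition subst_tile :: "nat \<Rightarrow> label \<Rightarrow> label \<Rightarrow> nat \<Rightarrow> nat \<Rightarrow> tile" where
  "subst_tile n u v i j =
     (subst_edge n u v i (Suc j), subst_edge n v u j (Suc i),
      subst_edge n u v i j, subst_edge n v u j i)"

lemma hat_subst_tile: "hat (subst_tile n u v i j) = subst_tile n v u j i"
  by (simp add: subst_tile_def)

lemma subst_tile_corner:
  assumes "n \<ge> 1" "u \<in> V n" "v \<in> V n"
  shows "subst_tile n u v 0 0 \<in> J' n"
  using assms by (cases u; cases v) (auto simp: subst_tile_def J'_def V_def)

lemma subst_tile_bottom_row:
  assumes n: "n \<ge> 1" and "u \<in> V n" and v: "(b, y, d) \<in> V n"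
    and "0 < j" "j < nat (int n + 1 - b)"
  shows "subst_tile n u (b, y, d) 0 j \<in> B' n \<union> G n \<union> Y n"
  using assms nth_tau[OF n v, of j]
  by (cases u) (auto simp: subst_tile_def B'_def G_def Y_def V_def)

lemma subst_tile_left_column:
  assumes "n \<ge> 1" and "(a, y, c) \<in> V n" and "v \<in> V n"
    and "0 < i" "i < nat (int n + 1 - a)"
  shows "subst_tile n (a, y, c) v i 0 \<in> hat ` (B' n \<union> G n \<union> Y n)"
proof -
  have "subst_tile n (a, y, c) v i 0 = hat (subst_tile n v (a, y, c) 0 i)"
    by (simp add: hat_subst_tile)
  then show ?thesis using subst_tile_bottom_row[OF assms(1,3,2,4,5)] by blast
qed

lemma subst_tile_interior:
  assumes "(a, y, c) \<in> V n" "(b, y', d) \<in> V n" "b = 1 \<or> int n \<le> c" "a = 1 \<or> int n \<le> d"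
    and "0 < i" "i < nat (int n + 1 - a)" "0 < j" "j < nat (int n + 1 - b)"
  shows "subst_tile n (a, y, c) (b, y', d) i j \<in> W n"
  using assms by (auto simp: subst_tile_def W_def V_def)

lemma subst_tile_mem:
  assumes "n \<ge> 1" "(a, y, c) \<in> V n" "(b, y', d) \<in> V n" "b = 1 \<or> int n \<le> c" "a = 1 \<or> int n \<le> d"
    and "i < nat (int n + 1 - a)" "j < nat (int n + 1 - b)"
  shows "subst_tile n (a, y, c) (b, y', d) i j \<in> T' n"
proof -
  consider "i = 0" "j = 0" | "i = 0" "0 < j" | "0 < i" "j = 0" | "0 < i" "0 < j"
    by blast
  then show ?thesis
  proof cases
    case 1
    then show ?thesis using subst_tile_corner[OF assms(1-3)] unfolding T'_def by blast
  next
    case 2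
    then show ?thesis using subst_tile_bottom_row[OF assms(1-3)] assms(7) unfolding T'_def by blast
  next
    case 3
    then show ?thesis using subst_tile_left_column[OF assms(1-3)] assms(6) unfolding T'_def by blast
  next
    case 4
    then show ?thesis
      using subst_tile_interior[OF assms(2-5) _ assms(6) _ assms(7)] unfolding T'_def by blast
  qed
qed

definition subst_pattern :: "nat \<Rightarrow> label \<Rightarrow> label \<Rightarrow> tile list list" where
  "subst_pattern n u v =
     grid_pattern (length (tau n u)) (length (tau n v))
       (subst_edge n u v) (\<lambda>i j. subst_edge n v u j i)"

lemma subst_pattern_labels:
  shows "right_labels (subst_pattern n u v) =
      map (\<lambda>i. subst_edge n u v i (length (tau n v))) [0..<length (tau n u)]"
    and "top_labels (subst_pattern n u v) =
      map (\<lambda>j. subst_edge n v u j (length (tau n u))) [0..<length (tau n v)]"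
    and "left_labels (subst_pattern n u v) = tau n u"
    and "bottom_labels (subst_pattern n u v) = tau n v"
  using tau_not_Nil[of n u] tau_not_Nil[of n v]
  by (simp_all add: subst_pattern_def grid_pattern_labels subst_edge_left_boundary map_nth)

lemma subst_pattern_realises:
  assumes n: "n \<ge> 1" and u: "(a, yu, c) \<in> V n" and v: "(b, yv, d) \<in> V n"
    and inner: "b = 1 \<or> int n \<le> c" "a = 1 \<or> int n \<le> d"
    and \<alpha>: "(a, ya, za) \<in> V n" and \<beta>: "(b, yb, zb) \<in> V n"
    and right: "\<And>i. i < nat (int n + 1 - a) \<Longrightarrow>
      subst_edge n (a, yu, c) (b, yv, d) i (nat (int n + 1 - b)) = tau n (a, ya, za) ! i"
    and top: "\<And>j. j < nat (int n + 1 - b) \<Longrightarrow>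
      subst_edge n (b, yv, d) (a, yu, c) j (nat (int n + 1 - a)) = tau n (b, yb, zb) ! j"
  shows "valid_pattern (T' n) (subst_pattern n (a, yu, c) (b, yv, d)) \<and>
    right_labels (subst_pattern n (a, yu, c) (b, yv, d)) = tau n (a, ya, za) \<and>
    top_labels (subst_pattern n (a, yu, c) (b, yv, d)) = tau n (b, yb, zb)"
proof (intro conjI)
  have pos: "0 < nat (int n + 1 - a)" "0 < nat (int n + 1 - b)"
    using n u v unfolding V_def by auto
  show "valid_pattern (T' n) (subst_pattern n (a, yu, c) (b, yv, d))"
    unfolding subst_pattern_def length_tau[OF n u] length_tau[OF n v]
  proof (rule valid_grid_pattern[OF pos])
    fix i j assume "i < nat (int n + 1 - a)" "j < nat (int n + 1 - b)"
    from subst_tile_mem[OF n u v inner this]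
    show "(subst_edge n (a, yu, c) (b, yv, d) i (Suc j),
        subst_edge n (b, yv, d) (a, yu, c) j (Suc i),
        subst_edge n (a, yu, c) (b, yv, d) i j,
        subst_edge n (b, yv, d) (a, yu, c) j i) \<in> T' n"
      unfolding subst_tile_def .
  qed
  have "right_labels (subst_pattern n (a, yu, c) (b, yv, d))
      = map (\<lambda>i. tau n (a, ya, za) ! i) [0..<length (tau n (a, ya, za))]"
    unfolding subst_pattern_labels length_tau[OF n u] length_tau[OF n v] length_tau[OF n \<alpha>]
    using right by (intro map_cong) simp_all
  then show "right_labels (subst_pattern n (a, yu, c) (b, yv, d)) = tau n (a, ya, za)"
    unfolding map_nth .
  have "top_labels (subst_pattern n (a, yu, c) (b, yv, d))
      = map (\<lambda>j. tau n (b, yb, zb) ! j) [0..<length (tau n (b, yb, zb))]"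
    unfolding subst_pattern_labels length_tau[OF n u] length_tau[OF n v] length_tau[OF n \<beta>]
    using top by (intro map_cong) simp_all
  then show "top_labels (subst_pattern n (a, yu, c) (b, yv, d)) = tau n (b, yb, zb)"
    unfolding map_nth .
qed

lemma subst_pattern_of_tile:
  assumes n: "n \<ge> 1" and t: "(\<alpha>, \<beta>, u, v) \<in> T' n"
  shows "valid_pattern (T' n) (subst_pattern n u v) \<and>
    right_labels (subst_pattern n u v) = tau n \<alpha> \<and> top_labels (subst_pattern n u v) = tau n \<beta>"
  using t[unfolded T'_def W_def B'_def G_def Y_def A_def J'_def] n
  by (elim UnE imageE CollectE exE conjE; simp only: hat.simps prod.inject; (elim conjE)?;
      hypsubst; intro subst_pattern_realises; auto simp: V_def nth_tau simp del: tau.simps)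

theorem lemma5p3:
  fixes n :: nat and \<alpha> \<beta> u v :: label
  assumes "n \<ge> 1"
    and "\<alpha> \<in> V n" and "\<beta> \<in> V n" and "u \<in> V n" and "v \<in> V n"
    and "(\<alpha>, \<beta>, u, v) \<in> T' n"
  shows "\<exists>!P. valid_pattern (T' n) P \<and>
              right_labels P = tau n \<alpha> \<and> top_labels P = tau n \<beta> \<and>
              left_labels P = tau n u \<and> bottom_labels P = tau n v"
proof
  let ?P = "subst_pattern n u v"
  show "valid_pattern (T' n) ?P \<and>
      right_labels ?P = tau n \<alpha> \<and> top_labels ?P = tau n \<beta> \<and>
      left_labels ?P = tau n u \<and> bottom_labels ?P = tau n v"
    using subst_pattern_of_tile[OF assms(1,6)] subst_pattern_labels(3,4) by simp
  fix Q
  assume "valid_pattern (T' n) Q \<and>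
      right_labels Q = tau n \<alpha> \<and> top_labels Q = tau n \<beta> \<and>
      left_labels Q = tau n u \<and> bottom_labels Q = tau n v"
  then show "Q = ?P"
    using valid_pattern_unique[OF inj_on_LEFT_BOTTOM_T'] subst_pattern_of_tile[OF assms(1,6)]
      subst_pattern_labels(3,4)
    by metis
qed

end
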